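(* Let $r\ge1$ and $n\ge 1$ be integers, and let $I_1\subseteq\mathbb{F}_3^r$ be the set of all vectors whose entries lie in $\{0,1\}$ and which have exactly $k$ entries equal to $1$ for some $k\in[n,2n-1]$. Then for any pairwise distinct $A,B,C\in I_1$ and any $\alpha,\beta,\gamma\in\{1,2\}$, \[\alpha A\oplus\beta B\oplus\gamma C\neq 0.\]
   Context: Vectors in $\mathbb{F}_3^r$ are identified with $r$-trit ternary strings; $\oplus$ is componentwise addition modulo $3$ and $\alpha A$ is componentwise scalar multiplication modulo $3$. *)

theory Defs
  imports Main
begin

text \<open>Vectors of F_3^r are represented as functions nat => int, with entries
  (representatives in {0,1,2}) at coordinates i < r and value 0 outside.\<close>

definition I1 :: "nat \<Rightarrow> nat \<Rightarrow> (nat \<Rightarrow> int) set" where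
  "I1 r n = {A. (\<forall>i<r. A i \<in> {0,1}) \<and> (\<forall>i\<ge>r. A i = 0) \<and>
               card {i. i < r \<and> A i = 1} \<in> {n..2*n-1}}"

definition lin3_zero :: "nat \<Rightarrow> int \<Rightarrow> (nat \<Rightarrow> int) \<Rightarrow> int \<Rightarrow> (nat \<Rightarrow> int) \<Rightarrow> int \<Rightarrow> (nat \<Rightarrow> int) \<Rightarrow> bool" where
  "lin3_zero r \<alpha> A \<beta> B \<gamma> C \<longleftrightarrow> (\<forall>i<r. (\<alpha> * A i + \<beta> * B i + \<gamma> * C i) mod 3 = 0)"

end

theory Submission
  imports Defs
begin

text \<open>For 0/1 vectors and coefficients in {1,2}, a vanishing combination
  \<alpha>A + \<beta>B + \<gamma>C over F_3 either has all coefficients equal, which forces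
  A = B = C coordinatewise, or two equal coefficients and a third one equal to
  their negative, say \<alpha> = \<beta> = -\<gamma>. In the latter case C = A + B holds over the
  integers, so A and B have disjoint supports and C has at least 2n ones,
  one more than the weights in I_1 allow.\<close>

lemma I1_entry: "A \<in> I1 r n \<Longrightarrow> i < r \<Longrightarrow> A i \<in> {0,1}"
  by (simp add: I1_def)

lemma I1_outside: "A \<in> I1 r n \<Longrightarrow> r \<le> i \<Longrightarrow> A i = 0"
  by (simp add: I1_def)

lemma zero_one_mod3_equal_coeffs:
  fixes a b c x :: int
  assumes "a \<in> {0,1}" "b \<in> {0,1}" "c \<in> {0,1}" "x \<in> {1,2}"
    and "(x * a + x * b + x * c) mod 3 = 0"
  shows "a = b"
  using assms by auto

lemma zero_one_mod3_opposite_coeff: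
  fixes a b c x z :: int
  assumes "a \<in> {0,1}" "b \<in> {0,1}" "c \<in> {0,1}" "x \<in> {1,2}" "z \<in> {1,2}" "x \<noteq> z"
    and "(x * a + x * b + z * c) mod 3 = 0"
  shows "c = a + b"
  using assms by auto

lemma card_ones_add:
  fixes A B C :: "nat \<Rightarrow> int"
  assumes "\<forall>i<r. A i \<in> {0,1} \<and> B i \<in> {0,1} \<and> C i \<in> {0,1} \<and> C i = A i + B i"
  shows "card {i. i < r \<and> C i = 1} = card {i. i < r \<and> A i = 1} + card {i. i < r \<and> B i = 1}"
proof -
  have "{i. i < r \<and> C i = 1} = {i. i < r \<and> A i = 1} \<union> {i. i < r \<and> B i = 1}"
    using assms by auto
  moreover have "{i. i < r \<and> A i = 1} \<inter> {i. i < r \<and> B i = 1} = {}"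
    using assms by fastforce
  ultimately show ?thesis
    by (simp add: card_Un_disjoint)
qed

lemma I1_not_sum:
  assumes "A \<in> I1 r n" "B \<in> I1 r n" "C \<in> I1 r n" "n \<ge> 1"
    and "\<And>i. i < r \<Longrightarrow> C i = A i + B i"
  shows False
proof -
  have "card {i. i < r \<and> C i = 1} = card {i. i < r \<and> A i = 1} + card {i. i < r \<and> B i = 1}"
  proof (rule card_ones_add, intro allI impI)
    fix i
    assume "i < r"
    then show "A i \<in> {0,1} \<and> B i \<in> {0,1} \<and> C i \<in> {0,1} \<and> C i = A i + B i"
      using I1_entry[OF assms(1)] I1_entry[OF assms(2)] I1_entry[OF assms(3)] assms(5) by blast
  qed
  moreover have "n \<le> card {i. i < r \<and> A i = 1}" "n \<le> card {i. i < r \<and> B i = 1}"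
    and "card {i. i < r \<and> C i = 1} \<le> 2 * n - 1"
    using assms(1-3) by (simp_all add: I1_def)
  ultimately show False
    using assms(4) by linarith
qed

lemma I1_equal_coeffs_imp_eq:
  assumes "A \<in> I1 r n" "B \<in> I1 r n" "C \<in> I1 r n" "x \<in> {1,2}"
    and "\<And>i. i < r \<Longrightarrow> (x * A i + x * B i + x * C i) mod 3 = 0"
  shows "A = B"
proof
  fix i
  show "A i = B i"
  proof (cases "i < r")
    case True
    show ?thesis
      using I1_entry[OF assms(1) True] I1_entry[OF assms(2) True] I1_entry[OF assms(3) True]
        assms(4) assms(5)[OF True]
      by (rule zero_one_mod3_equal_coeffs)
  next
    case False
    with assms(1,2) show ?thesis
      by (simp add: I1_outside)
  qed
qed

lemma I1_no_opposite_coeff_relation: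
  assumes "A \<in> I1 r n" "B \<in> I1 r n" "C \<in> I1 r n" "n \<ge> 1"
    and "x \<in> {1,2}" "z \<in> {1,2}" "x \<noteq> z"
    and "\<And>i. i < r \<Longrightarrow> (x * A i + x * B i + z * C i) mod 3 = 0"
  shows False
proof (rule I1_not_sum[OF assms(1-4)])
  fix i
  assume "i < r"
  show "C i = A i + B i"
    using I1_entry[OF assms(1) \<open>i < r\<close>] I1_entry[OF assms(2) \<open>i < r\<close>]
      I1_entry[OF assms(3) \<open>i < r\<close>] assms(5-7) assms(8)[OF \<open>i < r\<close>]
    by (rule zero_one_mod3_opposite_coeff)
qed

theorem theorem4p2:
  fixes r n :: nat and A B C :: "nat \<Rightarrow> int" and \<alpha> \<beta> \<gamma> :: int
  assumes "r \<ge> 1" and "n \<ge> 1"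
    and "A \<in> I1 r n" and "B \<in> I1 r n" and "C \<in> I1 r n"
    and "A \<noteq> B" and "B \<noteq> C" and "A \<noteq> C"
    and "\<alpha> \<in> {1,2}" and "\<beta> \<in> {1,2}" and "\<gamma> \<in> {1,2}"
  shows "\<not> lin3_zero r \<alpha> A \<beta> B \<gamma> C"
proof
  assume "lin3_zero r \<alpha> A \<beta> B \<gamma> C"
  then have zero: "\<And>i. i < r \<Longrightarrow> (\<alpha> * A i + \<beta> * B i + \<gamma> * C i) mod 3 = 0"
    by (simp add: lin3_zero_def)
  consider "\<alpha> = \<beta>" "\<beta> = \<gamma>" | "\<alpha> = \<beta>" "\<beta> \<noteq> \<gamma>" | "\<alpha> = \<gamma>" "\<beta> \<noteq> \<gamma>" | "\<beta> = \<gamma>" "\<alpha> \<noteq> \<gamma>"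
    using assms(9-11) by auto
  then show False
  proof cases
    case 1
    with zero have "A = B"
      using I1_equal_coeffs_imp_eq[OF assms(3-5,9)] by simp
    with assms(6) show False ..
  next
    case 2
    with zero show False
      using I1_no_opposite_coeff_relation[OF assms(3,4,5,2,10,11)] by simp
  next
    case 3
    with zero show False
      using I1_no_opposite_coeff_relation[OF assms(3,5,4,2,11,10)] by (simp add: ac_simps)
  next
    case 4
    with zero show False
      using I1_no_opposite_coeff_relation[OF assms(4,5,3,2,10,9)] by (simp add: ac_simps)
  qed
qed

end
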